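(* Let $K\subset\mathbb{R}^n$ and $C\subset\mathbb{R}^m$ be nonempty, convex, closed and bounded sets, and let $f,h:\mathbb{R}^n\times\mathbb{R}^m\to\mathbb{R}$ be continuous functions such that, for every $y\in K$, $f(y,\cdot)$ and $h(y,\cdot)$ are convex, and such that $f$ takes only positive values. Fix $y\in K$. Let $(\varepsilon_k)$ be a sequence of positive numbers with $\varepsilon_k\to0$, and let $x_k\in\mathcal{S}_{\varepsilon_k}(y)$ for every $k$. If $x_k\to\bar x$, then $\bar x\in\widetilde{\mathcal{S}}(y)$.
   Context: $f^2=(f)^2$. $\mathcal{S}(y)=\operatorname{argmin}\{h(y,z)\mid z\in C\}$; for $\varepsilon>0$, $\mathcal{S}_\varepsilon(y)=\operatorname{argmin}\{h(y,z)+\varepsilon f^2(y,z)\mid z\in C\}$; $\widetilde{\mathcal{S}}(y)=\operatorname{argmin}\{f^2(y,z)\mid z\in\mathcal{S}(y)\}$. *)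

theory Defs
  imports "HOL-Analysis.Analysis"
begin

definition argmin_set :: "('a \<Rightarrow> real) \<Rightarrow> 'a set \<Rightarrow> 'a set" where
  "argmin_set \<phi> A = {z \<in> A. \<forall>w\<in>A. \<phi> z \<le> \<phi> w}"

definition solS :: "('n \<Rightarrow> 'm \<Rightarrow> real) \<Rightarrow> 'm set \<Rightarrow> 'n \<Rightarrow> 'm set" where
  "solS h C y = argmin_set (\<lambda>z. h y z) C"

definition solS_eps :: "('n \<Rightarrow> 'm \<Rightarrow> real) \<Rightarrow> ('n \<Rightarrow> 'm \<Rightarrow> real) \<Rightarrow> 'm set \<Rightarrow> real \<Rightarrow> 'n \<Rightarrow> 'm set" where
  "solS_eps f h C \<epsilon> y = argmin_set (\<lambda>z. h y z + \<epsilon> * (f y z)\<^sup>2) C"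

definition solS_tilde :: "('n \<Rightarrow> 'm \<Rightarrow> real) \<Rightarrow> ('n \<Rightarrow> 'm \<Rightarrow> real) \<Rightarrow> 'm set \<Rightarrow> 'n \<Rightarrow> 'm set" where
  "solS_tilde f h C y = argmin_set (\<lambda>z. (f y z)\<^sup>2) (solS h C y)"

end

theory Submission
  imports Defs
begin

text \<open>
  Letting \<open>k \<rightarrow> \<infinity>\<close> in the optimality of \<open>x\<^sub>k\<close> for
  \<open>h(y,\<cdot>) + \<epsilon>\<^sub>k f\<^sup>2(y,\<cdot>)\<close> gives \<open>h(y,xbar) \<le> h(y,w)\<close> for all \<open>w \<in> C\<close>, since the penalty
  terms vanish (\<open>f\<^sup>2(y,x\<^sub>k)\<close> converges). If \<open>w\<close> minimises \<open>h(y,\<cdot>)\<close> over \<open>C\<close>, then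
  \<open>h(y,w) \<le> h(y,x\<^sub>k)\<close>, so the \<open>h\<close>-terms cancel in the optimality inequality and dividing by
  \<open>\<epsilon>\<^sub>k > 0\<close> leaves \<open>f\<^sup>2(y,x\<^sub>k) \<le> f\<^sup>2(y,w)\<close>, which passes to the limit.
\<close>

lemma continuous_on_curry_slice:
  assumes "continuous_on UNIV (\<lambda>(u, z). g u z)"
  shows "continuous_on A (g y)"
proof -
  have "continuous_on A (\<lambda>z. (\<lambda>(u, z). g u z) (y, z))"
    by (rule continuous_on_compose2[OF assms]) (auto intro: continuous_intros)
  then show ?thesis
    by simp
qed

context
  fixes \<phi> \<psi> :: "'a::topological_space \<Rightarrow> real" and C :: "'a set"
    and \<epsilon> :: "nat \<Rightarrow> real" and x :: "nat \<Rightarrow> 'a" and xbar :: 'a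
  assumes closed: "closed C"
    and cont_\<phi>: "continuous_on C \<phi>" and cont_\<psi>: "continuous_on C \<psi>"
    and \<epsilon>_pos: "\<And>k. \<epsilon> k > 0" and \<epsilon>_lim: "\<epsilon> \<longlonglongrightarrow> 0"
    and x_min: "\<And>k. x k \<in> argmin_set (\<lambda>z. \<phi> z + \<epsilon> k * \<psi> z) C"
    and x_lim: "x \<longlonglongrightarrow> xbar"
begin

private lemma x_in: "x k \<in> C"
  and x_le: "w \<in> C \<Longrightarrow> \<phi> (x k) + \<epsilon> k * \<psi> (x k) \<le> \<phi> w + \<epsilon> k * \<psi> w"
  using x_min[of k] by (auto simp: argmin_set_def)

private lemma xbar_in: "xbar \<in> C"
  using closed_sequentially[OF closed x_in x_lim] .

private lemma tendsto_comp_x: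
  assumes "continuous_on C g"
  shows "(\<lambda>k. g (x k)) \<longlonglongrightarrow> g xbar"
  using continuous_on_tendsto_compose[OF assms x_lim xbar_in] x_in by simp

lemma limit_of_penalized_minimizers_in_argmin_set:
  "xbar \<in> argmin_set \<phi> C"
  unfolding argmin_set_def
proof (intro CollectI conjI ballI xbar_in)
  fix w assume "w \<in> C"
  have "(\<lambda>k. \<phi> (x k) + \<epsilon> k * \<psi> (x k)) \<longlonglongrightarrow> \<phi> xbar + 0 * \<psi> xbar"
    by (intro tendsto_intros tendsto_comp_x cont_\<phi> cont_\<psi> \<epsilon>_lim)
  moreover have "(\<lambda>k. \<phi> w + \<epsilon> k * \<psi> w) \<longlonglongrightarrow> \<phi> w + 0 * \<psi> w"
    by (intro tendsto_intros \<epsilon>_lim)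
  ultimately show "\<phi> xbar \<le> \<phi> w"
    using LIMSEQ_le x_le[OF \<open>w \<in> C\<close>] by fastforce
qed

lemma limit_of_penalized_minimizers_in_lexicographic_argmin_set:
  "xbar \<in> argmin_set \<psi> (argmin_set \<phi> C)"
  unfolding argmin_set_def[of \<psi>]
proof (intro CollectI conjI ballI limit_of_penalized_minimizers_in_argmin_set)
  fix w assume "w \<in> argmin_set \<phi> C"
  then have "w \<in> C" and w_le: "\<phi> w \<le> \<phi> (x k)" for k
    using x_in by (auto simp: argmin_set_def)
  then have "\<epsilon> k * \<psi> (x k) \<le> \<epsilon> k * \<psi> w" for k
    using x_le[OF \<open>w \<in> C\<close>, of k] w_le[of k] by linarith
  then have "\<psi> (x k) \<le> \<psi> w" for k
    using \<epsilon>_pos mult_le_cancel_left_pos by blast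
  then show "\<psi> xbar \<le> \<psi> w"
    using LIMSEQ_le_const2[OF tendsto_comp_x[OF cont_\<psi>]] by blast
qed

end

theorem lemma3p2:
  fixes K :: "'n::euclidean_space set" and C :: "'m::euclidean_space set"
    and f h :: "'n \<Rightarrow> 'm \<Rightarrow> real"
    and y :: 'n and \<epsilon> :: "nat \<Rightarrow> real" and x :: "nat \<Rightarrow> 'm" and xbar :: 'm
  assumes "K \<noteq> {}" "convex K" "closed K" "bounded K"
    and "C \<noteq> {}" "convex C" "closed C" "bounded C"
    and "continuous_on UNIV (\<lambda>(u, z). f u z)"
    and "continuous_on UNIV (\<lambda>(u, z). h u z)"
    and "\<And>u. u \<in> K \<Longrightarrow> convex_on UNIV (f u)"
    and "\<And>u. u \<in> K \<Longrightarrow> convex_on UNIV (h u)"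
    and "\<And>u z. f u z > 0"
    and "y \<in> K"
    and "\<And>k. \<epsilon> k > 0"
    and "\<epsilon> \<longlonglongrightarrow> 0"
    and "\<And>k. x k \<in> solS_eps f h C (\<epsilon> k) y"
    and "x \<longlonglongrightarrow> xbar"
  shows "xbar \<in> solS_tilde f h C y"
proof -
  have "continuous_on C (h y)" "continuous_on C (\<lambda>z. (f y z)\<^sup>2)"
    using continuous_on_curry_slice assms(9,10) by (auto intro: continuous_intros)
  moreover have "x k \<in> argmin_set (\<lambda>z. h y z + \<epsilon> k * (f y z)\<^sup>2) C" for k
    using assms(17) by (simp add: solS_eps_def)
  ultimately show ?thesis
    unfolding solS_tilde_def solS_def
    using limit_of_penalized_minimizers_in_lexicographic_argmin_set[OF assms(7)] assms(15,16,18)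
    by blast
qed

end
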